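(* Let $L>1$ and let $\mathcal{T}$ be an $L$-increasing tree of any depth $D$, i.e. $c(v)\ge L\,c(u)$ whenever $u$ is an ancestor of $v$. Then the online algorithm \textsc{Noadd} is $\frac{L}{L-1}$-competitive for MLAPD on $\mathcal{T}$.
   Context: Multi-level aggregation problem with deadlines (MLAPD): an instance is a rooted tree $\mathcal{T}$ with root $r$ and positive node costs $c(v)>0$, together with a set $\mathcal{R}$ of requests $\rho=(v,a,d)$, each issued at a node $v$, with arrival time $a$ and deadline $d\ge a$ (deadlines are assumed distinct). A service is a pair $(S,t)$ where $S$ is a subtree of $\mathcal{T}$ containing $r$ and $t$ is the transmission time; it costs $c(S)=\sum_{u\in S}c(u)$. A request $(v,a,d)$ is satisfied by $(S,t)$ if $v\in S$ and $a\le t\le d$. A schedule is a set of services; it is feasible if every request is satisfied; its cost is the sum of its services' costs. Online: requests are revealed at their arrival times. For a request $\rho$ issued at $v$, $P_\rho$ denotes the set of nodes on the path from $r$ to $v$. An algorithm is $c$-competitive if its cost is at most $c$ times the optimal cost on every instance. \textsc{Noadd}: whenever a request $\rho$ that has not yet been satisfied by a previous transmission reaches its deadline $d_\rho$, it transmits $(P_\rho,d_\rho)$ and nothing else. *)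

theory Defs
  imports Complex_Main
begin

definition rooted_tree :: "'v set \<Rightarrow> 'v \<Rightarrow> ('v \<Rightarrow> 'v) \<Rightarrow> bool" where
  "rooted_tree V r par \<longleftrightarrow> finite V \<and> r \<in> V \<and>
     (\<forall>v\<in>V. v \<noteq> r \<longrightarrow> par v \<in> V) \<and>
     (\<forall>v\<in>V. \<exists>n. (par ^^ n) v = r)"

definition depth :: "'v \<Rightarrow> ('v \<Rightarrow> 'v) \<Rightarrow> 'v \<Rightarrow> nat" where
  "depth r par v = (LEAST n. (par ^^ n) v = r)"

definition root_path :: "'v \<Rightarrow> ('v \<Rightarrow> 'v) \<Rightarrow> 'v \<Rightarrow> 'v set" where
  "root_path r par v = {(par ^^ k) v | k. k \<le> depth r par v}"

definition ancestor :: "'v \<Rightarrow> ('v \<Rightarrow> 'v) \<Rightarrow> 'v \<Rightarrow> 'v \<Rightarrow> bool" where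
  "ancestor r par u v \<longleftrightarrow> u \<in> root_path r par v \<and> u \<noteq> v"

definition L_increasing :: "'v set \<Rightarrow> 'v \<Rightarrow> ('v \<Rightarrow> 'v) \<Rightarrow> ('v \<Rightarrow> real) \<Rightarrow> real \<Rightarrow> bool" where
  "L_increasing V r par c L \<longleftrightarrow>
     (\<forall>u\<in>V. \<forall>v\<in>V. ancestor r par u v \<longrightarrow> c v \<ge> L * c u)"

definition root_subtree :: "'v set \<Rightarrow> 'v \<Rightarrow> ('v \<Rightarrow> 'v) \<Rightarrow> 'v set \<Rightarrow> bool" where
  "root_subtree V r par S \<longleftrightarrow> S \<subseteq> V \<and> r \<in> S \<and> (\<forall>u\<in>S. u \<noteq> r \<longrightarrow> par u \<in> S)"

text \<open>Requests (v, a, d): node, arrival time, deadline.\<close>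
type_synonym 'v request = "'v \<times> real \<times> real"
type_synonym 'v service = "'v set \<times> real"

fun req_node :: "'v request \<Rightarrow> 'v" where "req_node (v, a, d) = v"
fun req_arr :: "'v request \<Rightarrow> real" where "req_arr (v, a, d) = a"
fun req_dl :: "'v request \<Rightarrow> real" where "req_dl (v, a, d) = d"

definition mlapd_instance ::
  "'v set \<Rightarrow> 'v \<Rightarrow> ('v \<Rightarrow> 'v) \<Rightarrow> ('v \<Rightarrow> real) \<Rightarrow> 'v request set \<Rightarrow> bool" where
  "mlapd_instance V r par c R \<longleftrightarrow> rooted_tree V r par \<and> (\<forall>v\<in>V. c v > 0) \<and>
     finite R \<and> (\<forall>\<rho>\<in>R. req_node \<rho> \<in> V \<and> req_arr \<rho> \<le> req_dl \<rho>) \<and> inj_on req_dl R"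

definition service_cost :: "('v \<Rightarrow> real) \<Rightarrow> 'v service \<Rightarrow> real" where
  "service_cost c s = sum c (fst s)"

definition satisfies :: "'v service \<Rightarrow> 'v request \<Rightarrow> bool" where
  "satisfies s \<rho> \<longleftrightarrow> req_node \<rho> \<in> fst s \<and> req_arr \<rho> \<le> snd s \<and> snd s \<le> req_dl \<rho>"

definition schedule :: "'v set \<Rightarrow> 'v \<Rightarrow> ('v \<Rightarrow> 'v) \<Rightarrow> 'v service set \<Rightarrow> bool" where
  "schedule V r par \<sigma> \<longleftrightarrow> finite \<sigma> \<and> (\<forall>s\<in>\<sigma>. root_subtree V r par (fst s))"

definition feasible :: "'v set \<Rightarrow> 'v \<Rightarrow> ('v \<Rightarrow> 'v) \<Rightarrow> 'v request set \<Rightarrow> 'v service set \<Rightarrow> bool" where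
  "feasible V r par R \<sigma> \<longleftrightarrow> schedule V r par \<sigma> \<and> (\<forall>\<rho>\<in>R. \<exists>s\<in>\<sigma>. satisfies s \<rho>)"

definition schedule_cost :: "('v \<Rightarrow> real) \<Rightarrow> 'v service set \<Rightarrow> real" where
  "schedule_cost c \<sigma> = (\<Sum>s\<in>\<sigma>. service_cost c s)"

definition noadd_step :: "'v \<Rightarrow> ('v \<Rightarrow> 'v) \<Rightarrow> 'v service set \<Rightarrow> 'v request \<Rightarrow> 'v service set" where
  "noadd_step r par T \<rho> =
     (if \<exists>s\<in>T. satisfies s \<rho> then T else insert (root_path r par (req_node \<rho>), req_dl \<rho>) T)"

definition noadd :: "'v \<Rightarrow> ('v \<Rightarrow> 'v) \<Rightarrow> 'v request set \<Rightarrow> 'v service set" where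
  "noadd r par R = foldl (noadd_step r par) {} (sorted_key_list_of_set req_dl R)"

end

theory Submission
  imports Defs
begin

text \<open>
  Let C be the set of requests that make Noadd transmit. Two requests of C at the same node have
  disjoint intervals [a, d]: the later one was not satisfied by the transmission of the earlier
  one, which reached its node at the earlier deadline. Hence a service of any feasible schedule
  serves, at each of its nodes u, at most one request of C issued at u, so the sum over C of the
  costs of the request nodes is at most the cost of the schedule. On the other hand, in an
  L-increasing tree the costs along a root path decrease geometrically towards the root, so the
  transmission for a request at v costs at most L/(L-1) c(v).
\<close>

text \<open>The facts of locale folding_insort_key are about the locale's own copy of
  sorted_key_list_of_set; this identifies it with the class constant used by noadd.\<close>

lemma linorder_sorted_key_list_of_set_eq:
  "linorder.sorted_key_list_of_set ((\<le>) :: 'a::linorder \<Rightarrow> _) = sorted_key_list_of_set"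
proof -
  have "linorder.insort_key ((\<le>) :: 'a \<Rightarrow> _) f x xs = insort_key f x xs"
    for f x and xs :: "'b list"
    by (induction xs) (auto simp: linorder.insort_key.simps[OF linorder_class.linorder_axioms])
  then have "linorder.insort_key ((\<le>) :: 'a \<Rightarrow> _) = (insort_key :: _ \<Rightarrow> 'b \<Rightarrow> _)"
    by (simp add: fun_eq_iff)
  then show ?thesis
    by (intro ext) (simp add: sorted_key_list_of_set_def
        linorder.sorted_key_list_of_set_def[OF linorder_class.linorder_axioms])
qed

lemma sorted_key_list_of_set_strict:
  fixes f :: "'b \<Rightarrow> 'a::linorder"
  assumes "inj_on f A" "finite A"
  shows "set (sorted_key_list_of_set f A) = A"
    and "sorted_wrt (\<lambda>x y. f x < f y) (sorted_key_list_of_set f A)"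
proof -
  interpret folding_insort_key "(\<le>)" "(<)" A f using assms(1) by unfold_locales
  show "set (sorted_key_list_of_set f A) = A"
    using set_sorted_key_list_of_set[OF order_refl assms(2)]
    by (simp add: linorder_sorted_key_list_of_set_eq)
  show "sorted_wrt (\<lambda>x y. f x < f y) (sorted_key_list_of_set f A)"
    using strict_sorted_key_list_of_set[OF order_refl]
    by (simp add: linorder_sorted_key_list_of_set_eq sorted_wrt_map)
qed

lemma funpow_depth_eq_root:
  assumes "rooted_tree V r par" "v \<in> V"
  shows "(par ^^ depth r par v) v = r"
proof -
  obtain n where "(par ^^ n) v = r" using assms unfolding rooted_tree_def by blast
  then show ?thesis unfolding depth_def by (rule LeastI)
qed

lemma funpow_neq_root_below_depth: "k < depth r par v \<Longrightarrow> (par ^^ k) v \<noteq> r"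
  unfolding depth_def by (rule not_less_Least)

lemma funpow_in_tree:
  assumes "rooted_tree V r par" "v \<in> V" "k \<le> depth r par v"
  shows "(par ^^ k) v \<in> V"
  using assms(3)
proof (induction k)
  case 0
  then show ?case using assms(2) by simp
next
  case (Suc k)
  then have "(par ^^ k) v \<in> V" "(par ^^ k) v \<noteq> r"
    using funpow_neq_root_below_depth[of k r par v] by auto
  then show ?case using assms(1) unfolding rooted_tree_def by auto
qed

lemma root_path_subset:
  assumes "rooted_tree V r par" "v \<in> V"
  shows "root_path r par v \<subseteq> V"
  using funpow_in_tree[OF assms] unfolding root_path_def by blast

lemma self_in_root_path: "v \<in> root_path r par v"
  unfolding root_path_def by (intro CollectI exI[of _ 0]) auto

lemma ancestor_par:
  assumes "rooted_tree V r par" "w \<in> V" "w \<noteq> r"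
  shows "ancestor r par (par w) w"
proof -
  have "depth r par w \<noteq> 0"
    using funpow_depth_eq_root[OF assms(1,2)] assms(3) by (metis funpow_0)
  then have "par w \<in> root_path r par w"
    unfolding root_path_def by (intro CollectI exI[of _ 1]) auto
  moreover have "par w \<noteq> w"
  proof
    assume "par w = w"
    then have "(par ^^ n) w = w" for n by (induction n) auto
    then show False using funpow_depth_eq_root[OF assms(1,2)] assms(3) by simp
  qed
  ultimately show ?thesis unfolding ancestor_def by simp
qed

lemma cost_funpow_le:
  assumes "rooted_tree V r par" "v \<in> V" "L_increasing V r par c L" "L > 0"
    and "k \<le> depth r par v"
  shows "c ((par ^^ k) v) \<le> c v / L ^ k"
  using assms(5)
proof (induction k)
  case 0
  then show ?case by simp
next
  case (Suc k)
  define w where "w = (par ^^ k) v"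
  have w: "w \<in> V" "w \<noteq> r"
    using Suc.prems funpow_in_tree[OF assms(1,2)] funpow_neq_root_below_depth[of k r par v]
    unfolding w_def by auto
  then have "par w \<in> V" using assms(1) unfolding rooted_tree_def by auto
  then have "L * c (par w) \<le> c w"
    using assms(3) ancestor_par[OF assms(1) w] w unfolding L_increasing_def by blast
  then have "c (par w) \<le> c w / L" using assms(4) by (simp add: field_simps)
  also have "\<dots> \<le> (c v / L ^ k) / L"
    using Suc assms(4) unfolding w_def by (intro divide_right_mono) auto
  finally show ?case unfolding w_def by (simp add: field_simps)
qed

lemma root_path_cost_le:
  assumes "rooted_tree V r par" "v \<in> V" "L_increasing V r par c L" "L > 1"
    and pos: "\<forall>u\<in>V. c u > 0"
  shows "sum c (root_path r par v) \<le> L / (L - 1) * c v"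
proof -
  let ?D = "depth r par v"
  have nonneg: "0 \<le> c ((par ^^ k) v)" if "k \<in> {..<Suc ?D}" for k
    using that funpow_in_tree[OF assms(1,2)] pos by (simp add: less_imp_le)
  have "root_path r par v = (\<lambda>k. (par ^^ k) v) ` {..<Suc ?D}"
    unfolding root_path_def by auto
  then have "sum c (root_path r par v) \<le> (\<Sum>k<Suc ?D. c ((par ^^ k) v))"
    using sum_image_le[of "{..<Suc ?D}" c, OF _ nonneg] by (simp add: o_def)
  also have "\<dots> \<le> (\<Sum>k<Suc ?D. c v * (1 / L) ^ k)"
    using cost_funpow_le[OF assms(1-3)] assms(4)
    by (intro sum_mono) (auto simp: power_divide)
  also have "\<dots> = c v * (\<Sum>k<Suc ?D. (1 / L) ^ k)" by (rule sum_distrib_left[symmetric])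
  also have "(\<Sum>k<Suc ?D. (1 / L) ^ k) \<le> (\<Sum>k. (1 / L) ^ k)"
    using assms(4) by (intro sum_le_suminf summable_geometric) auto
  also have "(\<Sum>k. (1 / L) ^ k) = L / (L - 1)"
    using assms(4) by (subst suminf_geometric) (auto simp: field_simps)
  finally show ?thesis
    using pos assms(2) by (simp add: mult.commute mult_left_mono)
qed

definition path_service :: "'v \<Rightarrow> ('v \<Rightarrow> 'v) \<Rightarrow> 'v request \<Rightarrow> 'v service" where
  "path_service r par \<rho> = (root_path r par (req_node \<rho>), req_dl \<rho>)"

definition node_separated :: "'v request set \<Rightarrow> bool" where
  "node_separated C \<longleftrightarrow> (\<forall>\<rho>1\<in>C. \<forall>\<rho>2\<in>C. \<rho>1 \<noteq> \<rho>2 \<longrightarrow> req_node \<rho>1 = req_node \<rho>2 \<longrightarrow>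
      req_dl \<rho>1 < req_arr \<rho>2 \<or> req_dl \<rho>2 < req_arr \<rho>1)"

lemma node_separated_insert:
  assumes "node_separated C"
    and "\<And>\<rho>'. \<rho>' \<in> C \<Longrightarrow> req_node \<rho>' = req_node \<rho> \<Longrightarrow> req_dl \<rho>' < req_arr \<rho>"
  shows "node_separated (insert \<rho> C)"
  using assms unfolding node_separated_def by (metis insert_iff)

lemma satisfies_node_separated_unique:
  assumes "node_separated C" "\<rho>1 \<in> C" "\<rho>2 \<in> C" "req_node \<rho>1 = req_node \<rho>2"
    and "satisfies s \<rho>1" "satisfies s \<rho>2"
  shows "\<rho>1 = \<rho>2"
  using assms unfolding node_separated_def satisfies_def by force

lemma foldl_noadd_step_path_services:
  assumes "sorted_wrt (\<lambda>x y. req_dl x < req_dl y) xs"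
    and "\<forall>\<rho>'\<in>C. \<forall>\<rho>\<in>set xs. req_dl \<rho>' < req_dl \<rho>"
    and "node_separated C"
  shows "\<exists>C'. C' \<subseteq> C \<union> set xs \<and> node_separated C' \<and>
           foldl (noadd_step r par) (path_service r par ` C) xs = path_service r par ` C'"
  using assms
proof (induction xs arbitrary: C)
  case Nil
  then show ?case by auto
next
  case (Cons \<rho> xs)
  let ?T = "path_service r par ` C"
  show ?case
  proof (cases "\<exists>s\<in>?T. satisfies s \<rho>")
    case True
    then have "noadd_step r par ?T \<rho> = ?T" by (simp add: noadd_step_def)
    with Cons.IH[of C] Cons.prems show ?thesis by auto
  next
    case False
    have "req_dl \<rho>' < req_arr \<rho>" if "\<rho>' \<in> C" "req_node \<rho>' = req_node \<rho>" for \<rho>'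
    proof -
      have "\<not> satisfies (path_service r par \<rho>') \<rho>" using False that(1) by auto
      moreover have "req_dl \<rho>' < req_dl \<rho>" using Cons.prems(2) that(1) by auto
      ultimately show ?thesis
        using self_in_root_path[of "req_node \<rho>"] that(2)
        by (auto simp: satisfies_def path_service_def)
    qed
    then have "node_separated (insert \<rho> C)"
      using node_separated_insert[OF Cons.prems(3)] by blast
    moreover have "\<forall>\<rho>'\<in>insert \<rho> C. \<forall>\<rho>''\<in>set xs. req_dl \<rho>' < req_dl \<rho>''"
      using Cons.prems(1,2) by auto
    moreover have "noadd_step r par ?T \<rho> = path_service r par ` insert \<rho> C"
      using False by (simp add: noadd_step_def path_service_def)
    ultimately obtain C' where "C' \<subseteq> insert \<rho> C \<union> set xs" "node_separated C'"
        "foldl (noadd_step r par) (path_service r par ` C) (\<rho> # xs) = path_service r par ` C'"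
      using Cons.IH[of "insert \<rho> C"] Cons.prems(1) by auto
    then show ?thesis by auto
  qed
qed

lemma noadd_eq_path_services:
  assumes "finite R" "inj_on req_dl R"
  obtains C where "C \<subseteq> R" "node_separated C" "noadd r par R = path_service r par ` C"
proof -
  let ?xs = "sorted_key_list_of_set req_dl R"
  have "\<exists>C. C \<subseteq> {} \<union> set ?xs \<and> node_separated C \<and>
          foldl (noadd_step r par) (path_service r par ` {}) ?xs = path_service r par ` C"
    using sorted_key_list_of_set_strict[OF assms(2,1)]
    by (intro foldl_noadd_step_path_services) (auto simp: node_separated_def)
  then show ?thesis
    using that sorted_key_list_of_set_strict(1)[OF assms(2,1)] by (auto simp: noadd_def)
qed

lemma node_cost_le_schedule_cost:
  assumes "finite V" "\<forall>v\<in>V. c v \<ge> 0" "feasible V r par R \<sigma>"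
    and "C \<subseteq> R" "node_separated C"
  shows "(\<Sum>\<rho>\<in>C. c (req_node \<rho>)) \<le> schedule_cost c \<sigma>"
proof -
  have \<sigma>: "finite \<sigma>" "\<forall>s\<in>\<sigma>. fst s \<subseteq> V" and sat: "\<forall>\<rho>\<in>R. \<exists>s\<in>\<sigma>. satisfies s \<rho>"
    using assms(3) unfolding feasible_def schedule_def root_subtree_def by auto
  then have fin: "finite (Sigma \<sigma> fst)" using assms(1) finite_subset by blast
  obtain sel where sel: "\<forall>\<rho>\<in>R. sel \<rho> \<in> \<sigma> \<and> satisfies (sel \<rho>) \<rho>" using sat by metis
  define g where "g \<rho> = (sel \<rho>, req_node \<rho>)" for \<rho>
  have "inj_on g C"
  proof (rule inj_onI)
    fix \<rho>1 \<rho>2 assume "\<rho>1 \<in> C" "\<rho>2 \<in> C" "g \<rho>1 = g \<rho>2"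
    moreover from this have "satisfies (sel \<rho>1) \<rho>1" "satisfies (sel \<rho>1) \<rho>2"
      using sel assms(4) unfolding g_def by (metis Pair_inject subsetD)+
    ultimately show "\<rho>1 = \<rho>2"
      using satisfies_node_separated_unique[OF assms(5)] by (simp add: g_def)
  qed
  then have "(\<Sum>\<rho>\<in>C. c (req_node \<rho>)) = (\<Sum>p\<in>g ` C. c (snd p))"
    by (simp add: sum.reindex) (simp add: g_def)
  also have "\<dots> \<le> (\<Sum>p\<in>Sigma \<sigma> fst. c (snd p))"
  proof (rule sum_mono2[OF fin])
    show "g ` C \<subseteq> Sigma \<sigma> fst"
      using sel assms(4) unfolding g_def satisfies_def by blast
    show "0 \<le> c (snd p)" if "p \<in> Sigma \<sigma> fst - g ` C" for p
      using that \<sigma>(2) assms(2) by fastforce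
  qed
  also have "\<dots> = schedule_cost c \<sigma>"
  proof -
    have "\<forall>s\<in>\<sigma>. finite (fst s)" using \<sigma>(2) assms(1) finite_subset by blast
    then show ?thesis
      using sum.Sigma[of \<sigma> fst "\<lambda>s u. c u"] \<sigma>(1)
      by (simp add: schedule_cost_def service_cost_def split_def)
  qed
  finally show ?thesis .
qed

theorem mainTheorem2:
  fixes V :: "'v set" and r :: 'v and par :: "'v \<Rightarrow> 'v" and c :: "'v \<Rightarrow> real"
    and L :: real and R :: "'v request set" and \<sigma> :: "'v service set"
  assumes "L > 1"
    and "mlapd_instance V r par c R"
    and "L_increasing V r par c L"
    and "feasible V r par R \<sigma>"
  shows "schedule_cost c (noadd r par R) \<le> L / (L - 1) * schedule_cost c \<sigma>"
proof -
  have tree: "rooted_tree V r par" and pos: "\<forall>v\<in>V. c v > 0"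
    and nodes: "\<forall>\<rho>\<in>R. req_node \<rho> \<in> V" and "finite R" "inj_on req_dl R"
    using assms(2) unfolding mlapd_instance_def by auto
  obtain C where C: "C \<subseteq> R" "node_separated C" "noadd r par R = path_service r par ` C"
    using noadd_eq_path_services[OF \<open>finite R\<close> \<open>inj_on req_dl R\<close>] .
  have path_costs: "\<forall>\<rho>\<in>C. 0 \<le> service_cost c (path_service r par \<rho>) \<and>
      service_cost c (path_service r par \<rho>) \<le> L / (L - 1) * c (req_node \<rho>)"
    using C(1) nodes root_path_subset[OF tree] root_path_cost_le[OF tree _ assms(3,1) pos] pos
    by (fastforce simp: service_cost_def path_service_def less_imp_le intro: sum_nonneg)
  have "schedule_cost c (noadd r par R) \<le> (\<Sum>\<rho>\<in>C. service_cost c (path_service r par \<rho>))"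
    unfolding C(3) schedule_cost_def
    using sum_image_le[of C "service_cost c" "path_service r par"] path_costs
      finite_subset[OF C(1) \<open>finite R\<close>]
    by (simp add: o_def)
  also have "\<dots> \<le> L / (L - 1) * (\<Sum>\<rho>\<in>C. c (req_node \<rho>))"
    using path_costs by (simp add: sum_distrib_left sum_mono)
  also have "\<dots> \<le> L / (L - 1) * schedule_cost c \<sigma>"
    using node_cost_le_schedule_cost[OF _ _ assms(4) C(1,2)] tree pos assms(1)
    by (intro mult_left_mono) (auto simp: rooted_tree_def less_imp_le)
  finally show ?thesis .
qed

end
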